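(* Let $R$ be a commutative ring. The following are equivalent: (1) $R$ is feckly clean; (2) $\operatorname{Max}(R)$ is a strongly zero-dimensional Hausdorff space; (3) $\operatorname{Max}(R)$ is strongly zero-dimensional, and whenever $a,b\in R$ satisfy $a+b=1$ there exist $r,s\in R$ with $(1+ar)(1+bs)\in J(R)$; (4) whenever $a,b\in R$ satisfy $a+b=1$, there exist $r,s,e\in R$ with $1+ar\in eR$, $1+bs\in(1-e)R$ and $e-e^2\in J(R)$.
   Context: Rings have identity; $J(R)$ is the Jacobson radical. An element $u\in R$ is full if $RuR=R$ (for commutative $R$ this means $u$ is a unit). An element $a\in R$ is feckly clean if there exist $e\in R$ and a full element $u\in R$ with $a=e+u$ and $eR(1-e)\subseteq J(R)$; $R$ is feckly clean if every element is feckly clean. $\operatorname{Max}(R)$ is the set of maximal ideals of $R$, topologized so that the closed sets are exactly the sets $V(I)=\{P\in\operatorname{Max}(R): I\subseteq P\}$ for ideals $I$. A topological space $X$ is strongly zero-dimensional if for any two disjoint closed sets $A,B\subseteq X$ there exist disjoint clopen sets $C_1,C_2$ with $A\subseteq C_1$ and $B\subseteq C_2$. *)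

theory Defs
  imports "HOL-Analysis.Analysis" "HOL-Algebra.Ideal"
begin

definition MaxSpec :: "('a, 'b) ring_scheme \<Rightarrow> 'a set set" where
  "MaxSpec R = {P. maximalideal P R}"

definition Vmax :: "('a, 'b) ring_scheme \<Rightarrow> 'a set \<Rightarrow> 'a set set" where
  "Vmax R I = {P \<in> MaxSpec R. I \<subseteq> P}"

text \<open>The topology on Max(R) whose closed sets are exactly the V(I), I an ideal:
  its open sets are the complements Max(R) - V(I) (these already form a topology,
  so the generated topology has exactly them as open sets).\<close>
definition MaxTop :: "('a, 'b) ring_scheme \<Rightarrow> 'a set topology" where
  "MaxTop R = topology_generated_by {MaxSpec R - Vmax R I | I. ideal I R}"

definition jacobson :: "('a, 'b) ring_scheme \<Rightarrow> 'a set" where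
  "jacobson R = carrier R \<inter> \<Inter>(MaxSpec R)"

definition full :: "('a, 'b) ring_scheme \<Rightarrow> 'a \<Rightarrow> bool" where
  "full R u \<longleftrightarrow> u \<in> carrier R \<and> genideal R {u} = carrier R"

definition feckly_clean_elem :: "('a, 'b) ring_scheme \<Rightarrow> 'a \<Rightarrow> bool" where
  "feckly_clean_elem R a \<longleftrightarrow>
     (\<exists>e \<in> carrier R. \<exists>u \<in> carrier R. full R u \<and> a = e \<oplus>\<^bsub>R\<^esub> u \<and>
        {e \<otimes>\<^bsub>R\<^esub> r \<otimes>\<^bsub>R\<^esub> (\<one>\<^bsub>R\<^esub> \<ominus>\<^bsub>R\<^esub> e) | r. r \<in> carrier R} \<subseteq> jacobson R)"

definition feckly_clean :: "('a, 'b) ring_scheme \<Rightarrow> bool" where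
  "feckly_clean R \<longleftrightarrow> (\<forall>a \<in> carrier R. feckly_clean_elem R a)"

definition strongly_zero_dimensional :: "'a topology \<Rightarrow> bool" where
  "strongly_zero_dimensional X \<longleftrightarrow>
     (\<forall>A B. closedin X A \<and> closedin X B \<and> A \<inter> B = {} \<longrightarrow>
        (\<exists>C1 C2. closedin X C1 \<and> openin X C1 \<and> closedin X C2 \<and> openin X C2 \<and>
                 C1 \<inter> C2 = {} \<and> A \<subseteq> C1 \<and> B \<subseteq> C2))"

end

theory Submission
  imports Defs
begin

(* All four conditions are shown equivalent to one ring-theoretic
   property, "idempotent separation": whenever a + b = 1 there is an element e,
   idempotent modulo J(R) (i.e. e - e^2 \<in> J(R)), such that every maximal ideal
   containing a avoids e and every maximal ideal containing b contains e. *)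

section \<open>Existence of maximal ideals\<close>

lemma (in ring) ideal_Union_chain:
  assumes nonempty: "C \<noteq> {}" and ideals: "\<And>I. I \<in> C \<Longrightarrow> ideal I R"
    and chain: "\<And>I K. I \<in> C \<Longrightarrow> K \<in> C \<Longrightarrow> I \<subseteq> K \<or> K \<subseteq> I"
  shows "ideal (\<Union>C) R"
proof (intro idealI subgroup.intro)
  have common: "\<exists>K\<in>C. x \<in> K \<and> y \<in> K" if "x \<in> \<Union>C" "y \<in> \<Union>C" for x y
    using that chain by blast
  show "ring R" by (rule ring_axioms)
  show "\<Union>C \<subseteq> carrier (add_monoid R)"
    using ideal.Icarr[OF ideals] by auto
  show "x \<otimes>\<^bsub>add_monoid R\<^esub> y \<in> \<Union>C" if "x \<in> \<Union>C" "y \<in> \<Union>C" for x y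
    using common[OF that] additive_subgroup.a_closed[OF ideal.axioms(1)[OF ideals]] by auto
  show "\<one>\<^bsub>add_monoid R\<^esub> \<in> \<Union>C"
    using nonempty additive_subgroup.zero_closed[OF ideal.axioms(1)[OF ideals]] by auto
  show "inv\<^bsub>add_monoid R\<^esub> x \<in> \<Union>C" if x: "x \<in> \<Union>C" for x
  proof -
    obtain K where "K \<in> C" "x \<in> K" using x by blast
    then have "\<ominus> x \<in> K"
      using additive_subgroup.a_inv_closed[OF ideal.axioms(1)[OF ideals]] by blast
    then show ?thesis using \<open>K \<in> C\<close> by (auto simp: a_inv_def)
  qed
  show "x \<otimes> a \<in> \<Union>C" "a \<otimes> x \<in> \<Union>C" if "a \<in> \<Union>C" "x \<in> carrier R" for a x
    using that ideal.I_l_closed[OF ideals] ideal.I_r_closed[OF ideals] by blast+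
qed

lemma (in ring) ideal_in_maximalideal:
  assumes I: "ideal I R" and proper: "\<one> \<notin> I"
  obtains M where "maximalideal M R" "I \<subseteq> M"
proof -
  let ?A = "{K. ideal K R \<and> I \<subseteq> K \<and> \<one> \<notin> K}"
  have "\<exists>M\<in>?A. \<forall>X\<in>?A. M \<subseteq> X \<longrightarrow> X = M"
  proof (rule subset_Zorn_nonempty)
    show "?A \<noteq> {}" using I proper by blast
  next
    fix C assume C: "C \<noteq> {}" "subset.chain ?A C"
    then have in_A: "C \<subseteq> ?A" and chain: "\<And>X Y. X \<in> C \<Longrightarrow> Y \<in> C \<Longrightarrow> X \<subseteq> Y \<or> Y \<subseteq> X"
      unfolding subset.chain_def by blast+
    have "ideal (\<Union>C) R"
      using ideal_Union_chain[OF C(1)] in_A chain by blast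
    moreover have "I \<subseteq> \<Union>C" "\<one> \<notin> \<Union>C" using C(1) in_A by blast+
    ultimately show "\<Union>C \<in> ?A" by blast
  qed
  then obtain M where "M \<in> ?A" and maximal: "\<And>X. X \<in> ?A \<Longrightarrow> M \<subseteq> X \<Longrightarrow> X = M"
    by auto
  then have M: "ideal M R" "I \<subseteq> M" "\<one> \<notin> M" by auto
  have "maximalideal M R"
  proof (rule maximalidealI)
    show "ideal M R" by (fact M(1))
    show "carrier R \<noteq> M" using M(3) by blast
    fix J assume J: "ideal J R" "M \<subseteq> J" "J \<subseteq> carrier R"
    show "J = M \<or> J = carrier R"
    proof (cases "\<one> \<in> J")
      case True then show ?thesis using ideal.one_imp_carrier[OF J(1)] by blast
    next
      case False then show ?thesis using maximal[of J] J M(2) by blast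
    qed
  qed
  then show ?thesis using M(2) that by blast
qed

context cring
begin

lemma MaxSpec_ideal: "M \<in> MaxSpec R \<Longrightarrow> ideal M R"
  by (simp add: MaxSpec_def maximalideal.axioms(1))

lemma MaxSpec_one: "M \<in> MaxSpec R \<Longrightarrow> \<one> \<notin> M"
  using ideal.one_imp_carrier[OF MaxSpec_ideal] maximalideal.I_notcarr by (auto simp: MaxSpec_def)

lemma MaxSpec_prime:
  "M \<in> MaxSpec R \<Longrightarrow> a \<in> carrier R \<Longrightarrow> b \<in> carrier R \<Longrightarrow> a \<otimes> b \<in> M \<Longrightarrow> a \<in> M \<or> b \<in> M"
  using primeideal.I_prime[OF maximalideal_prime] by (simp add: MaxSpec_def)

lemma MaxSpec_add: "M \<in> MaxSpec R \<Longrightarrow> x \<in> M \<Longrightarrow> y \<in> M \<Longrightarrow> x \<oplus> y \<in> M"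
  using additive_subgroup.a_closed[OF ideal.axioms(1)[OF MaxSpec_ideal]] by blast

lemma MaxSpec_minus: "M \<in> MaxSpec R \<Longrightarrow> x \<in> M \<Longrightarrow> y \<in> M \<Longrightarrow> x \<ominus> y \<in> M"
  using additive_subgroup.a_inv_closed[OF ideal.axioms(1)[OF MaxSpec_ideal]]
  by (simp add: a_minus_def MaxSpec_add)

lemma MaxSpec_mult: "M \<in> MaxSpec R \<Longrightarrow> x \<in> M \<Longrightarrow> y \<in> carrier R \<Longrightarrow> x \<otimes> y \<in> M"
  using ideal.I_r_closed[OF MaxSpec_ideal] by blast

lemma jacobson_iff: "x \<in> jacobson R \<longleftrightarrow> x \<in> carrier R \<and> (\<forall>M\<in>MaxSpec R. x \<in> M)"
  unfolding jacobson_def by auto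

lemma jacobson_mult: "x \<in> jacobson R \<Longrightarrow> y \<in> carrier R \<Longrightarrow> x \<otimes> y \<in> jacobson R"
  by (simp add: jacobson_iff MaxSpec_mult)

lemma comaximal_ideals:
  assumes I: "ideal I R" and K: "ideal K R"
    and no_common: "\<And>M. M \<in> MaxSpec R \<Longrightarrow> I \<subseteq> M \<Longrightarrow> K \<subseteq> M \<Longrightarrow> False"
  obtains x y where "x \<in> I" "y \<in> K" "x \<oplus> y = \<one>"
proof -
  have sum_ideal: "ideal (set_add R I K) R" by (rule add_ideals[OF I K])
  have sub: "I \<subseteq> set_add R I K" "K \<subseteq> set_add R I K"
    using union_genideal[OF I K] genideal_self[of "I \<union> K"] ideal.Icarr[OF I] ideal.Icarr[OF K]
    by blast+
  have "\<one> \<in> set_add R I K"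
  proof (rule ccontr)
    assume "\<one> \<notin> set_add R I K"
    then obtain M where "maximalideal M R" "set_add R I K \<subseteq> M"
      using ideal_in_maximalideal[OF sum_ideal] by blast
    then show False using no_common[of M] sub by (auto simp: MaxSpec_def)
  qed
  then obtain x y where "x \<in> I" "y \<in> K" "\<one> = x \<oplus> y" unfolding set_add_def' by blast
  then show ?thesis using that by simp
qed

lemma full_iff_not_in_MaxSpec:
  assumes u: "u \<in> carrier R"
  shows "full R u \<longleftrightarrow> (\<forall>M\<in>MaxSpec R. u \<notin> M)"
proof
  assume "full R u"
  then show "\<forall>M\<in>MaxSpec R. u \<notin> M"
    using genideal_minimal[OF MaxSpec_ideal] MaxSpec_one unfolding full_def by blast
next
  assume avoid: "\<forall>M\<in>MaxSpec R. u \<notin> M"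
  have "\<one> \<in> Idl {u}"
  proof (rule ccontr)
    assume "\<one> \<notin> Idl {u}"
    then obtain M where "maximalideal M R" "Idl {u} \<subseteq> M"
      using ideal_in_maximalideal[OF genideal_ideal] u by blast
    then show False using avoid genideal_self'[OF u] by (auto simp: MaxSpec_def)
  qed
  then show "full R u"
    unfolding full_def using ideal.one_imp_carrier[OF genideal_ideal] u by simp
qed

lemma idempotent_mod_jacobson_split:
  assumes e: "e \<in> carrier R" and idem: "e \<ominus> e \<otimes> e \<in> jacobson R" and M: "M \<in> MaxSpec R"
  shows "e \<in> M \<longleftrightarrow> \<one> \<ominus> e \<notin> M"
proof -
  have "e \<otimes> (\<one> \<ominus> e) = e \<ominus> e \<otimes> e" using e by algebra
  then have either: "e \<in> M \<or> \<one> \<ominus> e \<in> M"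
    using idem M MaxSpec_prime[OF M] e by (simp add: jacobson_iff)
  have "e \<oplus> (\<one> \<ominus> e) = \<one>" using e by algebra
  then have "\<not> (e \<in> M \<and> \<one> \<ominus> e \<in> M)" using MaxSpec_add[OF M] MaxSpec_one[OF M] by metis
  then show ?thesis using either by blast
qed

lemma one_plus_multiple_notin:
  assumes M: "M \<in> MaxSpec R" and a: "a \<in> carrier R" "a \<in> M" and r: "r \<in> carrier R"
  shows "\<one> \<oplus> a \<otimes> r \<notin> M"
proof
  assume "\<one> \<oplus> a \<otimes> r \<in> M"
  then have "(\<one> \<oplus> a \<otimes> r) \<ominus> a \<otimes> r \<in> M" using MaxSpec_minus MaxSpec_mult M a r by blast
  moreover have "(\<one> \<oplus> a \<otimes> r) \<ominus> a \<otimes> r = \<one>" using a r by algebra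
  ultimately show False using MaxSpec_one[OF M] by simp
qed

lemma one_plus_multiple_in_principal:
  assumes a: "a \<in> carrier R" and c: "c \<in> carrier R"
    and no_common: "\<And>M. M \<in> MaxSpec R \<Longrightarrow> a \<in> M \<Longrightarrow> c \<in> M \<Longrightarrow> False"
  shows "\<exists>r\<in>carrier R. \<one> \<oplus> a \<otimes> r \<in> {c \<otimes> x | x. x \<in> carrier R}"
proof -
  obtain p q where pq: "p \<in> PIdl a" "q \<in> PIdl c" "p \<oplus> q = \<one>"
  proof (rule comaximal_ideals[OF cgenideal_ideal[OF a] cgenideal_ideal[OF c]])
    fix M assume "M \<in> MaxSpec R" "PIdl a \<subseteq> M" "PIdl c \<subseteq> M"
    then show False using no_common cgenideal_self[OF a] cgenideal_self[OF c] by blast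
  qed
  obtain x y where xy: "x \<in> carrier R" "p = x \<otimes> a" "y \<in> carrier R" "q = y \<otimes> c"
    using pq(1,2) unfolding cgenideal_def by blast
  have "(x \<otimes> a \<oplus> y \<otimes> c) \<oplus> a \<otimes> (\<ominus> x) = c \<otimes> y" using a c xy by algebra
  then have "\<one> \<oplus> a \<otimes> (\<ominus> x) = c \<otimes> y" using pq(3) xy by simp
  then show ?thesis using xy by (intro bexI[of _ "\<ominus> x"]) auto
qed

end

section \<open>The topology of Max(R)\<close>

lemma openin_topology_generated_by_istopology:
  assumes top: "istopology (\<lambda>U. U \<in> \<S>)"
  shows "openin (topology_generated_by \<S>) U \<longleftrightarrow> U \<in> \<S>"
proof
  assume "openin (topology_generated_by \<S>) U"
  then have "generate_topology_on \<S> U" by (rule openin_topology_generated_by)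
  then show "U \<in> \<S>"
  proof (induction rule: generate_topology_on.induct)
    case Empty
    then show ?case using top unfolding istopology_def by (metis Sup_empty empty_iff)
  next
    case (Int a b)
    then show ?case using top unfolding istopology_def by blast
  next
    case (UN K)
    then show ?case using top unfolding istopology_def by blast
  qed
next
  assume "U \<in> \<S>"
  then show "openin (topology_generated_by \<S>) U" by (rule topology_generated_by_Basis)
qed

context cring
begin

text \<open>V(I \<inter> K) = V(I) \<union> V(K), since maximal ideals are prime.\<close>
lemma Vmax_Int:
  assumes I: "ideal I R" and K: "ideal K R"
  shows "Vmax R (I \<inter> K) = Vmax R I \<union> Vmax R K"
proof -
  have "I \<inter> K \<subseteq> M \<longleftrightarrow> I \<subseteq> M \<or> K \<subseteq> M" if M: "M \<in> MaxSpec R" for M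
  proof
    assume sub: "I \<inter> K \<subseteq> M"
    show "I \<subseteq> M \<or> K \<subseteq> M"
    proof (rule ccontr)
      assume "\<not> (I \<subseteq> M \<or> K \<subseteq> M)"
      then obtain x y where x: "x \<in> I" "x \<notin> M" and y: "y \<in> K" "y \<notin> M" by blast
      have carr: "x \<in> carrier R" "y \<in> carrier R"
        using ideal.Icarr[OF I x(1)] ideal.Icarr[OF K y(1)] by simp_all
      have "x \<otimes> y \<in> I \<inter> K"
        using ideal.I_r_closed[OF I x(1) carr(2)] ideal.I_l_closed[OF K y(1) carr(1)] by blast
      then show False using MaxSpec_prime[OF M carr] sub x(2) y(2) by blast
    qed
  qed blast
  then show ?thesis unfolding Vmax_def by blast
qed

lemma Vmax_Idl_Union:
  assumes ideals: "\<And>I. I \<in> \<I> \<Longrightarrow> ideal I R"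
  shows "Vmax R (Idl (\<Union>\<I>)) = {M \<in> MaxSpec R. \<forall>I\<in>\<I>. I \<subseteq> M}"
proof -
  have sub: "\<Union>\<I> \<subseteq> carrier R" using ideal.Icarr[OF ideals] by blast
  have "Idl (\<Union>\<I>) \<subseteq> M \<longleftrightarrow> (\<forall>I\<in>\<I>. I \<subseteq> M)" if "M \<in> MaxSpec R" for M
    using Idl_subset_ideal[OF MaxSpec_ideal[OF that] sub] by blast
  then show ?thesis unfolding Vmax_def by blast
qed

lemma istopology_MaxSpec_opens:
  "istopology (\<lambda>U. U \<in> {MaxSpec R - Vmax R I | I. ideal I R})"
  unfolding istopology_def
proof (intro conjI allI impI)
  fix U V assume "U \<in> {MaxSpec R - Vmax R I | I. ideal I R}" "V \<in> {MaxSpec R - Vmax R I | I. ideal I R}"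
  then obtain I K where I: "ideal I R" "U = MaxSpec R - Vmax R I"
    and K: "ideal K R" "V = MaxSpec R - Vmax R K" by blast
  have "U \<inter> V = MaxSpec R - (Vmax R I \<union> Vmax R K)" using I(2) K(2) by blast
  also have "\<dots> = MaxSpec R - Vmax R (I \<inter> K)" by (simp add: Vmax_Int[OF I(1) K(1)])
  finally show "U \<inter> V \<in> {MaxSpec R - Vmax R I | I. ideal I R}"
    using i_intersect[OF I(1) K(1)] by blast
next
  fix \<K> assume opens: "\<forall>U\<in>\<K>. U \<in> {MaxSpec R - Vmax R I | I. ideal I R}"
  define \<I> where "\<I> = {I. ideal I R \<and> MaxSpec R - Vmax R I \<in> \<K>}"
  have ideals: "\<And>I. I \<in> \<I> \<Longrightarrow> ideal I R" unfolding \<I>_def by blast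
  have "\<Union>\<K> = (\<Union>I\<in>\<I>. MaxSpec R - Vmax R I)"
  proof (intro equalityI subsetI)
    fix M assume "M \<in> \<Union>\<K>"
    then obtain U where U: "U \<in> \<K>" "M \<in> U" by blast
    then obtain I where "ideal I R" "U = MaxSpec R - Vmax R I" using opens by blast
    then show "M \<in> (\<Union>I\<in>\<I>. MaxSpec R - Vmax R I)" using U unfolding \<I>_def by blast
  qed (auto simp: \<I>_def)
  also have "\<dots> = MaxSpec R - {M \<in> MaxSpec R. \<forall>I\<in>\<I>. I \<subseteq> M}" by (auto simp: Vmax_def)
  also have "\<dots> = MaxSpec R - Vmax R (Idl (\<Union>\<I>))" by (simp add: Vmax_Idl_Union[OF ideals])
  finally have "\<Union>\<K> = MaxSpec R - Vmax R (Idl (\<Union>\<I>))" .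
  moreover have "ideal (Idl (\<Union>\<I>)) R"
    by (rule genideal_ideal) (use ideal.Icarr[OF ideals] in blast)
  ultimately show "\<Union>\<K> \<in> {MaxSpec R - Vmax R I | I. ideal I R}" by blast
qed

lemma openin_MaxTop:
  "openin (MaxTop R) U \<longleftrightarrow> (\<exists>I. ideal I R \<and> U = MaxSpec R - Vmax R I)"
  unfolding MaxTop_def openin_topology_generated_by_istopology[OF istopology_MaxSpec_opens]
  by blast

lemma topspace_MaxTop: "topspace (MaxTop R) = MaxSpec R"
proof -
  have "Vmax R (carrier R) = {}" unfolding Vmax_def using MaxSpec_one by blast
  then have "openin (MaxTop R) (MaxSpec R)" using openin_MaxTop oneideal by auto
  then have "MaxSpec R \<subseteq> topspace (MaxTop R)" by (rule openin_subset)
  moreover have "topspace (MaxTop R) \<subseteq> MaxSpec R"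
    using openin_topspace[of "MaxTop R"] unfolding openin_MaxTop by blast
  ultimately show ?thesis by blast
qed

lemma closedin_MaxTop:
  "closedin (MaxTop R) A \<longleftrightarrow> (\<exists>I. ideal I R \<and> A = Vmax R I)"
proof
  assume "closedin (MaxTop R) A"
  then obtain I where "ideal I R" "MaxSpec R - A = MaxSpec R - Vmax R I" "A \<subseteq> MaxSpec R"
    unfolding closedin_def topspace_MaxTop openin_MaxTop by blast
  moreover have "Vmax R I \<subseteq> MaxSpec R" unfolding Vmax_def by blast
  ultimately show "\<exists>I. ideal I R \<and> A = Vmax R I" by blast
next
  assume "\<exists>I. ideal I R \<and> A = Vmax R I"
  then obtain I where I: "ideal I R" "A = Vmax R I" by blast
  have "A \<subseteq> MaxSpec R" unfolding I(2) Vmax_def by blast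
  moreover have "openin (MaxTop R) (MaxSpec R - A)" unfolding openin_MaxTop using I by blast
  ultimately show "closedin (MaxTop R) A" unfolding closedin_def topspace_MaxTop by blast
qed

end

lemma strongly_zero_dimensionalE:
  assumes szd: "strongly_zero_dimensional X"
    and A: "closedin X A" and B: "closedin X B" and disjoint: "A \<inter> B = {}"
  obtains C where "closedin X C" "openin X C" "A \<subseteq> C" "B \<inter> C = {}"
proof -
  obtain C1 C2 where "closedin X C1" "openin X C1" "C1 \<inter> C2 = {}" "A \<subseteq> C1" "B \<subseteq> C2"
    using szd[unfolded strongly_zero_dimensional_def, rule_format, OF conjI[OF A conjI[OF B disjoint]]]
    by blast
  then show ?thesis using that by blast
qed

lemma strongly_zero_dimensional_imp_Hausdorff:
  assumes szd: "strongly_zero_dimensional X"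
    and points_closed: "\<And>x. x \<in> topspace X \<Longrightarrow> closedin X {x}"
  shows "Hausdorff_space X"
  unfolding Hausdorff_space_def
proof (intro allI impI)
  fix x y assume xy: "x \<in> topspace X \<and> y \<in> topspace X \<and> x \<noteq> y"
  then obtain C where C: "closedin X C" "openin X C" "{x} \<subseteq> C" "{y} \<inter> C = {}"
    using strongly_zero_dimensionalE[OF szd points_closed[of x] points_closed[of y]] by blast
  show "\<exists>U V. openin X U \<and> openin X V \<and> x \<in> U \<and> y \<in> V \<and> disjnt U V"
  proof (intro exI conjI)
    show "openin X C" by (fact C(2))
    show "openin X (topspace X - C)" using C(1) by blast
    show "x \<in> C" "y \<in> topspace X - C" "disjnt C (topspace X - C)"
      using C(3,4) xy by (auto simp: disjnt_def)
  qed
qed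

section \<open>Idempotents modulo the Jacobson radical and clopen sets of Max(R)\<close>

context
  fixes R :: "('a, 'b) ring_scheme" (structure)
begin

definition Dmax :: "'a \<Rightarrow> 'a set set" where
  "Dmax e = {M \<in> MaxSpec R. e \<notin> M}"

definition separating_idempotent :: "'a \<Rightarrow> 'a \<Rightarrow> 'a \<Rightarrow> bool" where
  "separating_idempotent a b e \<longleftrightarrow> e \<in> carrier R \<and> e \<ominus> e \<otimes> e \<in> jacobson R \<and>
     (\<forall>M\<in>MaxSpec R. a \<in> M \<longrightarrow> e \<notin> M) \<and> (\<forall>M\<in>MaxSpec R. b \<in> M \<longrightarrow> e \<in> M)"

definition idempotent_separation :: bool where
  "idempotent_separation \<longleftrightarrow>
     (\<forall>a\<in>carrier R. \<forall>b\<in>carrier R. a \<oplus> b = \<one> \<longrightarrow> (\<exists>e. separating_idempotent a b e))"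

definition comaximal_product_in_jacobson :: bool where
  "comaximal_product_in_jacobson \<longleftrightarrow>
     (\<forall>a \<in> carrier R. \<forall>b \<in> carrier R. a \<oplus> b = \<one> \<longrightarrow>
        (\<exists>r \<in> carrier R. \<exists>s \<in> carrier R. (\<one> \<oplus> a \<otimes> r) \<otimes> (\<one> \<oplus> b \<otimes> s) \<in> jacobson R))"

definition comaximal_idempotent_factorization :: bool where
  "comaximal_idempotent_factorization \<longleftrightarrow>
     (\<forall>a \<in> carrier R. \<forall>b \<in> carrier R. a \<oplus> b = \<one> \<longrightarrow>
        (\<exists>r \<in> carrier R. \<exists>s \<in> carrier R. \<exists>e \<in> carrier R.
           \<one> \<oplus> a \<otimes> r \<in> {e \<otimes> x | x. x \<in> carrier R} \<and>
           \<one> \<oplus> b \<otimes> s \<in> {(\<one> \<ominus> e) \<otimes> x | x. x \<in> carrier R} \<and>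
           e \<ominus> e \<otimes> e \<in> jacobson R))"

end

context cring
begin

lemma Vmax_PIdl: "a \<in> carrier R \<Longrightarrow> Vmax R (PIdl a) = {M \<in> MaxSpec R. a \<in> M}"
  unfolding Vmax_def using cgenideal_minimal cgenideal_self MaxSpec_ideal by blast

lemma idempotent_mod_jacobson_complement:
  assumes e: "e \<in> carrier R" and idem: "e \<ominus> e \<otimes> e \<in> jacobson R"
  shows "(\<one> \<ominus> e) \<ominus> (\<one> \<ominus> e) \<otimes> (\<one> \<ominus> e) \<in> jacobson R"
    and "Dmax R (\<one> \<ominus> e) = MaxSpec R - Dmax R e"
proof -
  have "(\<one> \<ominus> e) \<ominus> (\<one> \<ominus> e) \<otimes> (\<one> \<ominus> e) = e \<ominus> e \<otimes> e" using e by algebra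
  then show "(\<one> \<ominus> e) \<ominus> (\<one> \<ominus> e) \<otimes> (\<one> \<ominus> e) \<in> jacobson R" using idem by simp
  show "Dmax R (\<one> \<ominus> e) = MaxSpec R - Dmax R e"
    unfolding Dmax_def using idempotent_mod_jacobson_split[OF e idem] by blast
qed

lemma Dmax_clopen:
  assumes e: "e \<in> carrier R" and idem: "e \<ominus> e \<otimes> e \<in> jacobson R"
  shows "openin (MaxTop R) (Dmax R e)" and "closedin (MaxTop R) (Dmax R e)"
proof -
  have e': "\<one> \<ominus> e \<in> carrier R" using e by simp
  have "Dmax R e = MaxSpec R - Vmax R (PIdl e)" unfolding Dmax_def Vmax_PIdl[OF e] by blast
  then show "openin (MaxTop R) (Dmax R e)"
    unfolding openin_MaxTop using cgenideal_ideal[OF e] by blast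
  have "Dmax R e = MaxSpec R - Dmax R (\<one> \<ominus> e)"
    using idempotent_mod_jacobson_complement(2)[OF e idem] unfolding Dmax_def by blast
  also have "\<dots> = Vmax R (PIdl (\<one> \<ominus> e))" unfolding Dmax_def Vmax_PIdl[OF e'] by blast
  finally show "closedin (MaxTop R) (Dmax R e)"
    unfolding closedin_MaxTop using cgenideal_ideal[OF e'] by blast
qed

text \<open>Conversely, every clopen subset of Max(R) is D(e) for an idempotent e modulo J(R):
  write C = V(I) and its complement as V(K); then I + K = R, and the K-component of 1
  is the required e.\<close>
lemma clopen_is_Dmax:
  assumes closed: "closedin (MaxTop R) C" and opn: "openin (MaxTop R) C"
  obtains e where "e \<in> carrier R" "e \<ominus> e \<otimes> e \<in> jacobson R" "C = Dmax R e"
proof -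
  obtain I where I: "ideal I R" "C = Vmax R I" using closed closedin_MaxTop by blast
  obtain K where K: "ideal K R" "MaxSpec R - C = Vmax R K"
    using closedin_MaxTop closedin_diff[OF closedin_topspace opn] topspace_MaxTop by metis
  have in_C: "M \<in> C \<longleftrightarrow> I \<subseteq> M" and notin_C: "M \<notin> C \<longleftrightarrow> K \<subseteq> M" if "M \<in> MaxSpec R" for M
    using that I(2) K(2) unfolding Vmax_def by blast+
  obtain x y where xy: "x \<in> I" "y \<in> K" "x \<oplus> y = \<one>"
    using comaximal_ideals[OF I(1) K(1)] in_C notin_C by blast
  have x: "x \<in> carrier R" and y: "y \<in> carrier R"
    using ideal.Icarr[OF I(1) xy(1)] ideal.Icarr[OF K(1) xy(2)] by simp_all
  have "y \<ominus> y \<otimes> y = y \<otimes> x"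
  proof -
    have "x = (x \<oplus> y) \<ominus> y" using x y by algebra
    then have "x = \<one> \<ominus> y" using xy(3) by simp
    then show ?thesis using y by algebra
  qed
  moreover have "y \<otimes> x \<in> M" if M: "M \<in> MaxSpec R" for M
    using ideal.I_l_closed[OF I(1) xy(1) y] ideal.I_r_closed[OF K(1) xy(2) x] in_C[OF M] notin_C[OF M]
    by blast
  ultimately have idem: "y \<ominus> y \<otimes> y \<in> jacobson R" using x y by (simp add: jacobson_iff)
  have "C = Dmax R y"
  proof -
    have "M \<in> C \<longleftrightarrow> y \<notin> M" if M: "M \<in> MaxSpec R" for M
    proof
      assume "M \<in> C"
      then have "x \<in> M" using in_C[OF M] xy(1) by blast
      then show "y \<notin> M" using MaxSpec_add[OF M] MaxSpec_one[OF M] xy(3) by metis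
    qed (use notin_C[OF M] xy(2) in blast)
    moreover have "C \<subseteq> MaxSpec R" using I(2) unfolding Vmax_def by blast
    ultimately show ?thesis unfolding Dmax_def by blast
  qed
  then show ?thesis using that y idem by blast
qed

end

section \<open>Condition (2): Max(R) is strongly zero-dimensional\<close>

context cring
begin

text \<open>Points of Max(R) are closed: V(M) = {M} for a maximal ideal M.\<close>
lemma closedin_MaxTop_point:
  assumes M: "M \<in> topspace (MaxTop R)"
  shows "closedin (MaxTop R) {M}"
proof -
  have M': "M \<in> MaxSpec R" using M topspace_MaxTop by simp
  have "P = M" if "P \<in> MaxSpec R" "M \<subseteq> P" for P
    using maximalideal.I_maximal[of M R P] MaxSpec_ideal[OF that(1)] MaxSpec_one[OF that(1)] that(2) M'
      ideal.Icarr[OF MaxSpec_ideal[OF that(1)]]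
    by (auto simp: MaxSpec_def)
  then have "{M} = Vmax R M" using M' unfolding Vmax_def by blast
  then show ?thesis unfolding closedin_MaxTop using MaxSpec_ideal[OF M'] by blast
qed

text \<open>Separate the disjoint closed sets V(aR), V(bR) by a clopen set, which is some D(e).\<close>
lemma strongly_zero_dimensional_imp_idempotent_separation:
  assumes szd: "strongly_zero_dimensional (MaxTop R)"
  shows "idempotent_separation R"
  unfolding idempotent_separation_def
proof (intro ballI impI)
  fix a b assume a: "a \<in> carrier R" and b: "b \<in> carrier R" and ab: "a \<oplus> b = \<one>"
  have closed: "closedin (MaxTop R) (Vmax R (PIdl a))" "closedin (MaxTop R) (Vmax R (PIdl b))"
    unfolding closedin_MaxTop using cgenideal_ideal a b by blast+
  have "Vmax R (PIdl a) \<inter> Vmax R (PIdl b) = {}"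
    unfolding Vmax_PIdl[OF a] Vmax_PIdl[OF b] using MaxSpec_add MaxSpec_one ab by fastforce
  then obtain C where C: "closedin (MaxTop R) C" "openin (MaxTop R) C"
    "Vmax R (PIdl a) \<subseteq> C" "Vmax R (PIdl b) \<inter> C = {}"
    using strongly_zero_dimensionalE[OF szd closed] by blast
  obtain e where e: "e \<in> carrier R" "e \<ominus> e \<otimes> e \<in> jacobson R" "C = Dmax R e"
    using clopen_is_Dmax[OF C(1,2)] by blast
  have "separating_idempotent R a b e"
    unfolding separating_idempotent_def
    using e C(3,4) unfolding Vmax_PIdl[OF a] Vmax_PIdl[OF b] Dmax_def by blast
  then show "\<exists>e. separating_idempotent R a b e" ..
qed

text \<open>Disjoint closed sets V(I), V(K) give x \<in> I, y \<in> K with x + y = 1; an idempotent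
  separating x from y yields the complementary clopen sets D(e) and D(1 - e).\<close>
lemma idempotent_separation_imp_strongly_zero_dimensional:
  assumes sep: "idempotent_separation R"
  shows "strongly_zero_dimensional (MaxTop R)"
  unfolding strongly_zero_dimensional_def
proof (intro allI impI)
  fix A B assume AB: "closedin (MaxTop R) A \<and> closedin (MaxTop R) B \<and> A \<inter> B = {}"
  obtain I K where I: "ideal I R" "A = Vmax R I" and K: "ideal K R" "B = Vmax R K"
    using AB closedin_MaxTop by meson
  obtain x y where xy: "x \<in> I" "y \<in> K" "x \<oplus> y = \<one>"
    using comaximal_ideals[OF I(1) K(1)] AB I(2) K(2) unfolding Vmax_def by blast
  have "x \<in> carrier R" "y \<in> carrier R"
    using ideal.Icarr[OF I(1) xy(1)] ideal.Icarr[OF K(1) xy(2)] by simp_all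
  then obtain e where "separating_idempotent R x y e"
    using sep xy(3) unfolding idempotent_separation_def by blast
  then have e: "e \<in> carrier R" "e \<ominus> e \<otimes> e \<in> jacobson R"
    and x_sep: "\<And>M. M \<in> MaxSpec R \<Longrightarrow> x \<in> M \<Longrightarrow> e \<notin> M"
    and y_sep: "\<And>M. M \<in> MaxSpec R \<Longrightarrow> y \<in> M \<Longrightarrow> e \<in> M"
    unfolding separating_idempotent_def by blast+
  note complement = idempotent_mod_jacobson_complement[OF e]
  show "\<exists>C1 C2. closedin (MaxTop R) C1 \<and> openin (MaxTop R) C1 \<and>
      closedin (MaxTop R) C2 \<and> openin (MaxTop R) C2 \<and> C1 \<inter> C2 = {} \<and> A \<subseteq> C1 \<and> B \<subseteq> C2"
  proof (intro exI conjI)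
    show "closedin (MaxTop R) (Dmax R e)" "openin (MaxTop R) (Dmax R e)"
      using Dmax_clopen[OF e] by blast+
    show "closedin (MaxTop R) (Dmax R (\<one> \<ominus> e))" "openin (MaxTop R) (Dmax R (\<one> \<ominus> e))"
      using Dmax_clopen[OF _ complement(1)] e(1) by blast+
    show "Dmax R e \<inter> Dmax R (\<one> \<ominus> e) = {}" using complement(2) by blast
    show "A \<subseteq> Dmax R e" using I(2) xy(1) x_sep unfolding Vmax_def Dmax_def by blast
    show "B \<subseteq> Dmax R (\<one> \<ominus> e)" using K(2) xy(2) y_sep complement(2) unfolding Vmax_def Dmax_def by blast
  qed
qed

lemma strongly_zero_dimensional_iff_idempotent_separation:
  "strongly_zero_dimensional (MaxTop R) \<longleftrightarrow> idempotent_separation R"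
  using strongly_zero_dimensional_imp_idempotent_separation
    idempotent_separation_imp_strongly_zero_dimensional by blast

text \<open>Hausdorffness comes for free, since points of Max(R) are closed.\<close>
lemma idempotent_separation_imp_Hausdorff:
  "idempotent_separation R \<Longrightarrow> Hausdorff_space (MaxTop R)"
  using strongly_zero_dimensional_imp_Hausdorff[OF _ closedin_MaxTop_point]
    idempotent_separation_imp_strongly_zero_dimensional by blast

end

section \<open>Condition (1): feckly clean rings\<close>

context cring
begin

text \<open>If a = e + u is a feckly clean decomposition and a + b = 1, then e separates a from b:
  a maximal ideal containing a and e would contain u = a - e, and one containing b and
  1 - e would contain u = (1 - e) - b.\<close>
lemma feckly_clean_elem_imp_separating_idempotent:
  assumes fc: "feckly_clean_elem R a" and b: "b \<in> carrier R" and ab: "a \<oplus> b = \<one>"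
  shows "\<exists>e. separating_idempotent R a b e"
proof -
  obtain e u where e: "e \<in> carrier R" and u: "u \<in> carrier R" and "full R u" and a: "a = e \<oplus> u"
    and corner: "{e \<otimes> r \<otimes> (\<one> \<ominus> e) | r. r \<in> carrier R} \<subseteq> jacobson R"
    using fc unfolding feckly_clean_elem_def by blast
  then have u_avoids: "\<And>M. M \<in> MaxSpec R \<Longrightarrow> u \<notin> M" using full_iff_not_in_MaxSpec by blast
  have "e \<otimes> \<one> \<otimes> (\<one> \<ominus> e) = e \<ominus> e \<otimes> e" using e by algebra
  then have idem: "e \<ominus> e \<otimes> e \<in> jacobson R" using corner by force
  have u_eq: "u = a \<ominus> e" "u = (\<one> \<ominus> e) \<ominus> b"
  proof -
    show "u = a \<ominus> e" unfolding a using e u by algebra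
    have "u = ((e \<oplus> u) \<oplus> b \<ominus> e) \<ominus> b" using e u b by algebra
    then show "u = (\<one> \<ominus> e) \<ominus> b" using a ab by simp
  qed
  have "separating_idempotent R a b e"
    unfolding separating_idempotent_def
  proof (intro conjI ballI impI e idem)
    fix M assume M: "M \<in> MaxSpec R"
    show "e \<notin> M" if "a \<in> M"
      using MaxSpec_minus[OF M that] u_eq(1) u_avoids[OF M] by blast
    show "e \<in> M" if "b \<in> M"
      using MaxSpec_minus[OF M _ that] u_eq(2) u_avoids[OF M]
        idempotent_mod_jacobson_split[OF e idem M] by blast
  qed
  then show ?thesis ..
qed

text \<open>Conversely, an idempotent e modulo J(R) separating a from 1 - a gives the
  feckly clean decomposition a = e + (a - e).\<close>
lemma separating_idempotent_imp_feckly_clean_elem: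
  assumes a: "a \<in> carrier R" and sep: "separating_idempotent R a (\<one> \<ominus> a) e"
  shows "feckly_clean_elem R a"
proof -
  have e: "e \<in> carrier R" and idem: "e \<ominus> e \<otimes> e \<in> jacobson R"
    and a_sep: "\<And>M. M \<in> MaxSpec R \<Longrightarrow> a \<in> M \<Longrightarrow> e \<notin> M"
    and a'_sep: "\<And>M. M \<in> MaxSpec R \<Longrightarrow> \<one> \<ominus> a \<in> M \<Longrightarrow> e \<in> M"
    using sep unfolding separating_idempotent_def by blast+
  define u where "u = a \<ominus> e"
  have u: "u \<in> carrier R" unfolding u_def using a e by simp
  have a_eq: "a = e \<oplus> u" "a = u \<oplus> e" "\<one> \<ominus> a = (\<one> \<ominus> e) \<ominus> u"
    unfolding u_def using a e by algebra+
  have "u \<notin> M" if M: "M \<in> MaxSpec R" for M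
  proof
    assume uM: "u \<in> M"
    show False
    proof (cases "e \<in> M")
      case True
      then show False using MaxSpec_add[OF M uM True] a_eq(2) a_sep[OF M] by simp
    next
      case False
      then have "\<one> \<ominus> e \<in> M" using idempotent_mod_jacobson_split[OF e idem M] by simp
      then show False using MaxSpec_minus[OF M _ uM] a_eq(3) a'_sep[OF M] False by simp
    qed
  qed
  then have "full R u" using full_iff_not_in_MaxSpec[OF u] by blast
  moreover have "e \<otimes> r \<otimes> (\<one> \<ominus> e) \<in> jacobson R" if r: "r \<in> carrier R" for r
  proof -
    have "e \<otimes> r \<otimes> (\<one> \<ominus> e) = (e \<ominus> e \<otimes> e) \<otimes> r" using e r by algebra
    then show ?thesis using jacobson_mult[OF idem r] by simp
  qed
  ultimately show ?thesis unfolding feckly_clean_elem_def using e u a_eq(1) by blast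
qed

lemma feckly_clean_iff_idempotent_separation:
  "feckly_clean R \<longleftrightarrow> idempotent_separation R"
proof
  assume "feckly_clean R"
  then show "idempotent_separation R"
    unfolding feckly_clean_def idempotent_separation_def
    using feckly_clean_elem_imp_separating_idempotent by blast
next
  assume sep: "idempotent_separation R"
  have "feckly_clean_elem R a" if a: "a \<in> carrier R" for a
  proof -
    have "a \<oplus> (\<one> \<ominus> a) = \<one>" using a by algebra
    then obtain e where "separating_idempotent R a (\<one> \<ominus> a) e"
      using sep a unfolding idempotent_separation_def by blast
    then show ?thesis using separating_idempotent_imp_feckly_clean_elem[OF a] by blast
  qed
  then show "feckly_clean R" unfolding feckly_clean_def by blast
qed

end

section \<open>Conditions (3) and (4): factorizations through idempotents modulo J(R)\<close>

context cring
begin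

text \<open>A separating idempotent e lets one write some 1 + a r as a multiple of e and
  some 1 + b s as a multiple of 1 - e, since a and e (resp. b and 1 - e) lie in no
  common maximal ideal.\<close>
lemma separating_idempotent_imp_factorization:
  assumes a: "a \<in> carrier R" and b: "b \<in> carrier R" and sep: "separating_idempotent R a b e"
  shows "\<exists>r\<in>carrier R. \<one> \<oplus> a \<otimes> r \<in> {e \<otimes> x | x. x \<in> carrier R}"
    and "\<exists>s\<in>carrier R. \<one> \<oplus> b \<otimes> s \<in> {(\<one> \<ominus> e) \<otimes> x | x. x \<in> carrier R}"
proof -
  have e: "e \<in> carrier R" and idem: "e \<ominus> e \<otimes> e \<in> jacobson R"
    and a_sep: "\<And>M. M \<in> MaxSpec R \<Longrightarrow> a \<in> M \<Longrightarrow> e \<notin> M"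
    and b_sep: "\<And>M. M \<in> MaxSpec R \<Longrightarrow> b \<in> M \<Longrightarrow> e \<in> M"
    using sep unfolding separating_idempotent_def by blast+
  show "\<exists>r\<in>carrier R. \<one> \<oplus> a \<otimes> r \<in> {e \<otimes> x | x. x \<in> carrier R}"
    by (rule one_plus_multiple_in_principal[OF a e]) (use a_sep in blast)
  show "\<exists>s\<in>carrier R. \<one> \<oplus> b \<otimes> s \<in> {(\<one> \<ominus> e) \<otimes> x | x. x \<in> carrier R}"
  proof (rule one_plus_multiple_in_principal[OF b])
    show "\<one> \<ominus> e \<in> carrier R" using e by simp
    fix M assume "M \<in> MaxSpec R" "b \<in> M" "\<one> \<ominus> e \<in> M"
    then show False using b_sep idempotent_mod_jacobson_split[OF e idem] by blast
  qed
qed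

lemma factorization_imp_separating_idempotent:
  assumes carr: "a \<in> carrier R" "b \<in> carrier R" "r \<in> carrier R" "s \<in> carrier R" "e \<in> carrier R"
    and fa: "\<one> \<oplus> a \<otimes> r \<in> {e \<otimes> x | x. x \<in> carrier R}"
    and fb: "\<one> \<oplus> b \<otimes> s \<in> {(\<one> \<ominus> e) \<otimes> x | x. x \<in> carrier R}"
    and idem: "e \<ominus> e \<otimes> e \<in> jacobson R"
  shows "separating_idempotent R a b e"
  unfolding separating_idempotent_def
proof (intro conjI ballI impI carr(5) idem)
  obtain x y where x: "x \<in> carrier R" "\<one> \<oplus> a \<otimes> r = e \<otimes> x"
    and y: "y \<in> carrier R" "\<one> \<oplus> b \<otimes> s = (\<one> \<ominus> e) \<otimes> y"
    using fa fb by blast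
  fix M assume M: "M \<in> MaxSpec R"
  show "e \<notin> M" if "a \<in> M"
  proof
    assume "e \<in> M"
    then have "\<one> \<oplus> a \<otimes> r \<in> M" using MaxSpec_mult[OF M _ x(1)] x(2) by simp
    then show False using one_plus_multiple_notin[OF M carr(1) that carr(3)] by contradiction
  qed
  show "e \<in> M" if "b \<in> M"
  proof (rule ccontr)
    assume "e \<notin> M"
    then have "\<one> \<ominus> e \<in> M" using idempotent_mod_jacobson_split[OF carr(5) idem M] by simp
    then have "\<one> \<oplus> b \<otimes> s \<in> M" using MaxSpec_mult[OF M _ y(1)] y(2) by simp
    then show False using one_plus_multiple_notin[OF M carr(2) that carr(4)] by contradiction
  qed
qed

text \<open>The factorizations of condition (4) give the product condition of (3):
  (e x)((1 - e) y) = (e - e^2) x y.\<close>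
lemma factorization_imp_product_in_jacobson:
  assumes e: "e \<in> carrier R"
    and fa: "p \<in> {e \<otimes> x | x. x \<in> carrier R}" and fb: "q \<in> {(\<one> \<ominus> e) \<otimes> x | x. x \<in> carrier R}"
    and idem: "e \<ominus> e \<otimes> e \<in> jacobson R"
  shows "p \<otimes> q \<in> jacobson R"
proof -
  obtain x y where x: "x \<in> carrier R" "p = e \<otimes> x" and y: "y \<in> carrier R" "q = (\<one> \<ominus> e) \<otimes> y"
    using fa fb by blast
  have "p \<otimes> q = (e \<ominus> e \<otimes> e) \<otimes> (x \<otimes> y)" unfolding x(2) y(2) using e x(1) y(1) by algebra
  then show ?thesis using jacobson_mult[OF idem] x(1) y(1) by simp
qed

lemma comaximal_idempotent_factorizationE:
  assumes fact: "comaximal_idempotent_factorization R"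
    and a: "a \<in> carrier R" and b: "b \<in> carrier R" and ab: "a \<oplus> b = \<one>"
  obtains r s e where "r \<in> carrier R" "s \<in> carrier R" "e \<in> carrier R"
    "\<one> \<oplus> a \<otimes> r \<in> {e \<otimes> x | x. x \<in> carrier R}"
    "\<one> \<oplus> b \<otimes> s \<in> {(\<one> \<ominus> e) \<otimes> x | x. x \<in> carrier R}"
    "e \<ominus> e \<otimes> e \<in> jacobson R"
  using fact[unfolded comaximal_idempotent_factorization_def, rule_format, OF a b ab] that by blast

lemma comaximal_idempotent_factorization_iff_idempotent_separation:
  "comaximal_idempotent_factorization R \<longleftrightarrow> idempotent_separation R"
proof
  assume fact: "comaximal_idempotent_factorization R"
  show "idempotent_separation R"
    unfolding idempotent_separation_def
  proof (intro ballI impI)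
    fix a b assume a: "a \<in> carrier R" and b: "b \<in> carrier R" and ab: "a \<oplus> b = \<one>"
    obtain r s e where "r \<in> carrier R" "s \<in> carrier R" "e \<in> carrier R"
      "\<one> \<oplus> a \<otimes> r \<in> {e \<otimes> x | x. x \<in> carrier R}"
      "\<one> \<oplus> b \<otimes> s \<in> {(\<one> \<ominus> e) \<otimes> x | x. x \<in> carrier R}" "e \<ominus> e \<otimes> e \<in> jacobson R"
      by (rule comaximal_idempotent_factorizationE[OF fact a b ab])
    then show "\<exists>e. separating_idempotent R a b e"
      using factorization_imp_separating_idempotent[OF a b] by blast
  qed
next
  assume sep: "idempotent_separation R"
  show "comaximal_idempotent_factorization R"
    unfolding comaximal_idempotent_factorization_def
  proof (intro ballI impI)
    fix a b assume a: "a \<in> carrier R" and b: "b \<in> carrier R" and ab: "a \<oplus> b = \<one>"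
    then obtain e where e: "separating_idempotent R a b e"
      using sep unfolding idempotent_separation_def by blast
    obtain r where "r \<in> carrier R" "\<one> \<oplus> a \<otimes> r \<in> {e \<otimes> x | x. x \<in> carrier R}"
      using separating_idempotent_imp_factorization(1)[OF a b e] by blast
    moreover obtain s where "s \<in> carrier R" "\<one> \<oplus> b \<otimes> s \<in> {(\<one> \<ominus> e) \<otimes> x | x. x \<in> carrier R}"
      using separating_idempotent_imp_factorization(2)[OF a b e] by blast
    moreover have "e \<in> carrier R" "e \<ominus> e \<otimes> e \<in> jacobson R"
      using e unfolding separating_idempotent_def by blast+
    ultimately show "\<exists>r\<in>carrier R. \<exists>s\<in>carrier R. \<exists>e\<in>carrier R.
        \<one> \<oplus> a \<otimes> r \<in> {e \<otimes> x | x. x \<in> carrier R} \<and>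
        \<one> \<oplus> b \<otimes> s \<in> {(\<one> \<ominus> e) \<otimes> x | x. x \<in> carrier R} \<and> e \<ominus> e \<otimes> e \<in> jacobson R"
      by blast
  qed
qed

lemma comaximal_idempotent_factorization_imp_product:
  assumes fact: "comaximal_idempotent_factorization R"
  shows "comaximal_product_in_jacobson R"
  unfolding comaximal_product_in_jacobson_def
proof (intro ballI impI)
  fix a b assume a: "a \<in> carrier R" and b: "b \<in> carrier R" and ab: "a \<oplus> b = \<one>"
  obtain r s e where rse: "r \<in> carrier R" "s \<in> carrier R" "e \<in> carrier R"
    and fa: "\<one> \<oplus> a \<otimes> r \<in> {e \<otimes> x | x. x \<in> carrier R}"
    and fb: "\<one> \<oplus> b \<otimes> s \<in> {(\<one> \<ominus> e) \<otimes> x | x. x \<in> carrier R}"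
    and idem: "e \<ominus> e \<otimes> e \<in> jacobson R"
    by (rule comaximal_idempotent_factorizationE[OF fact a b ab])
  show "\<exists>r\<in>carrier R. \<exists>s\<in>carrier R. (\<one> \<oplus> a \<otimes> r) \<otimes> (\<one> \<oplus> b \<otimes> s) \<in> jacobson R"
    using factorization_imp_product_in_jacobson[OF rse(3) fa fb idem] rse(1,2) by blast
qed

end

theorem theorem5p4:
  fixes R (structure)
  assumes "cring R"
  shows "(feckly_clean R \<longleftrightarrow>
            strongly_zero_dimensional (MaxTop R) \<and> Hausdorff_space (MaxTop R))
       \<and> (strongly_zero_dimensional (MaxTop R) \<and> Hausdorff_space (MaxTop R) \<longleftrightarrow>
            strongly_zero_dimensional (MaxTop R) \<and>
            (\<forall>a \<in> carrier R. \<forall>b \<in> carrier R. a \<oplus> b = \<one> \<longrightarrow>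
               (\<exists>r \<in> carrier R. \<exists>s \<in> carrier R.
                  (\<one> \<oplus> a \<otimes> r) \<otimes> (\<one> \<oplus> b \<otimes> s) \<in> jacobson R)))
       \<and> (strongly_zero_dimensional (MaxTop R) \<and>
            (\<forall>a \<in> carrier R. \<forall>b \<in> carrier R. a \<oplus> b = \<one> \<longrightarrow>
               (\<exists>r \<in> carrier R. \<exists>s \<in> carrier R.
                  (\<one> \<oplus> a \<otimes> r) \<otimes> (\<one> \<oplus> b \<otimes> s) \<in> jacobson R))
          \<longleftrightarrow>
            (\<forall>a \<in> carrier R. \<forall>b \<in> carrier R. a \<oplus> b = \<one> \<longrightarrow>
               (\<exists>r \<in> carrier R. \<exists>s \<in> carrier R. \<exists>e \<in> carrier R.
                  \<one> \<oplus> a \<otimes> r \<in> {e \<otimes> x | x. x \<in> carrier R} \<and>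
                  \<one> \<oplus> b \<otimes> s \<in> {(\<one> \<ominus> e) \<otimes> x | x. x \<in> carrier R} \<and>
                  e \<ominus> e \<otimes> e \<in> jacobson R)))"
proof -
  interpret cring R by fact
  have "(feckly_clean R \<longleftrightarrow>
            strongly_zero_dimensional (MaxTop R) \<and> Hausdorff_space (MaxTop R))
     \<and> (strongly_zero_dimensional (MaxTop R) \<and> Hausdorff_space (MaxTop R) \<longleftrightarrow>
            strongly_zero_dimensional (MaxTop R) \<and> comaximal_product_in_jacobson R)
     \<and> (strongly_zero_dimensional (MaxTop R) \<and> comaximal_product_in_jacobson R \<longleftrightarrow>
            comaximal_idempotent_factorization R)"
    using feckly_clean_iff_idempotent_separation
      strongly_zero_dimensional_iff_idempotent_separation
      idempotent_separation_imp_Hausdorff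
      comaximal_idempotent_factorization_iff_idempotent_separation
      comaximal_idempotent_factorization_imp_product
    by blast
  then show ?thesis
    unfolding comaximal_product_in_jacobson_def comaximal_idempotent_factorization_def .
qed

end
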